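(* For every sample size $n$, every sample $\mathbf{x}_1,\dots,\mathbf{x}_n\in\mathbb{R}$ and every $N\ge 0$, the Hermite series distribution function estimator satisfies $\sup_{x\in\mathbb{R}}|\hat F_N(x)|\le C N^{17/12}$ for all $N\ge1$, where $C$ is a constant not depending on $N$, $n$, the sample, or $x$; i.e. $\max_x|\hat F_N(x)|=O(N^{17/12})$ as $N\to\infty$. (The same holds for the estimator built from the $\mathbf{y}_i$.)
   Context: Hermite functions: $h_k(x)=(2^k k!\sqrt{\pi})^{-1/2}e^{-x^2/2}H_k(x)$ with $H_k(x)=(-1)^k e^{x^2}\frac{d^k}{dx^k}e^{-x^2}$. Given observations $\mathbf{x}_1,\dots,\mathbf{x}_n$, let $\hat a_k=\frac1n\sum_{i=1}^n h_k(\mathbf{x}_i)$ and $\hat F_N(x)=\sum_{k=0}^N\hat a_k\int_{-\infty}^x h_k(t)\,dt$. *)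

theory Defs
  imports "HOL-Analysis.Analysis"
begin

definition hermite_poly :: "nat \<Rightarrow> real \<Rightarrow> real" where
  "hermite_poly k x = (-1) ^ k * exp (x^2) * ((deriv ^^ k) (\<lambda>t. exp (-(t^2))) x)"

definition hermite_fun :: "nat \<Rightarrow> real \<Rightarrow> real" where
  "hermite_fun k x = (2 ^ k * fact k * sqrt pi) powr (-1/2) * exp (-(x^2) / 2) * hermite_poly k x"

definition hermite_coef_est :: "nat \<Rightarrow> (nat \<Rightarrow> real) \<Rightarrow> nat \<Rightarrow> real" where
  "hermite_coef_est n X k = (1 / real n) * (\<Sum>i=1..n. hermite_fun k (X i))"

definition hermite_cdf_est :: "nat \<Rightarrow> (nat \<Rightarrow> real) \<Rightarrow> nat \<Rightarrow> real \<Rightarrow> real" where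
  "hermite_cdf_est n X N x =
     (\<Sum>k=0..N. hermite_coef_est n X k * integral {..x} (hermite_fun k))"

end

theory Submission
  imports
    Defs
    "HOL-Computational_Algebra.Polynomial"
    "HOL-Probability.Distributions"
    "HOL-Probability.Sinc_Integral"
    "HOL-Real_Asymp.Real_Asymp"
begin

(*
  Write F_N(x) = int_{-oo}^x phi with phi = sum_{k<=N} a_k h_k = P(t) exp(-t^2/2) for a polynomial P.
  By AM-GM, |phi| <= (s (1 + t^2) phi^2 + 1 / (s (1 + t^2))) / 2, so
  |F_N(x)| <= (s int (1 + t^2) phi^2 + pi / s) / 2.
  Integration by parts against exp(-t^2) gives the identity
  int ((P' - t P)^2 + t^2 P^2) exp(-t^2) = int (P^2 + P'^2) exp(-t^2);
  since the normalized Hermite polynomials P_k are orthonormal for the weight exp(-t^2) and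
  P_k' = sqrt(2k) P_{k-1}, this bounds int (1 + t^2) phi^2 by sum_k (2 + 2k) a_k^2.
  The same identity, together with P(x)^2 exp(-x^2) = int_{-oo}^x (P^2 exp(-t^2))', gives
  sup h_k^2 <= 2 sqrt(2k + 1), hence a_k^2 = O(sqrt k) for every sample.
  Thus int (1 + t^2) phi^2 = O(N^(5/2)), and s = N^(-5/4) yields the bound O(N^(5/4)),
  which is within O(N^(17/12)).
*)

fun hermite_pol :: "nat \<Rightarrow> real poly" where
  "hermite_pol 0 = 1"
| "hermite_pol (Suc k) = [:0, 2:] * hermite_pol k - pderiv (hermite_pol k)"

lemma higher_deriv_gaussian:
  "(deriv ^^ k) (\<lambda>t. exp (-(t^2))) = (\<lambda>t. (-1) ^ k * poly (hermite_pol k) t * exp (-(t^2)))"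
proof (induction k)
  case 0
  then show ?case by simp
next
  case (Suc k)
  have "((\<lambda>t. (-1) ^ k * poly (hermite_pol k) t * exp (-(t^2))) has_real_derivative
      (-1) ^ Suc k * poly (hermite_pol (Suc k)) t * exp (-(t^2))) (at t)" for t
    by (auto intro!: derivative_eq_intros poly_DERIV simp: algebra_simps)
  then have "deriv (\<lambda>t. (-1) ^ k * poly (hermite_pol k) t * exp (-(t^2))) =
      (\<lambda>t. (-1) ^ Suc k * poly (hermite_pol (Suc k)) t * exp (-(t^2)))"
    by (intro ext DERIV_imp_deriv)
  with Suc.IH show ?case
    by simp
qed

lemma hermite_poly_eq_poly: "hermite_poly k x = poly (hermite_pol k) x"
proof -
  have "(-1::real) ^ k * (-1) ^ k = 1"
    by (simp flip: power_mult_distrib)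
  moreover have "exp (x^2) * exp (-(x^2)) = 1"
    by (simp flip: exp_add)
  moreover have "hermite_poly k x =
      ((-1) ^ k * (-1) ^ k) * (exp (x^2) * exp (-(x^2))) * poly (hermite_pol k) x"
    unfolding hermite_poly_def higher_deriv_gaussian by (simp only: mult_ac)
  ultimately show ?thesis
    by simp
qed

lemma pderiv_hermite_pol: "pderiv (hermite_pol k) = smult (2 * real k) (hermite_pol (k - 1))"
proof (induction k)
  case 0
  then show ?case by simp
next
  case (Suc k)
  show ?case
  proof (cases k)
    case 0
    then show ?thesis by (simp add: pderiv_pCons pderiv_mult)
  next
    case (Suc m)
    have "[:0, 2:] * smult (2 * real k) (hermite_pol (k - 1))
        - smult (2 * real k) (pderiv (hermite_pol (k - 1))) = smult (2 * real k) (hermite_pol k)"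
      using Suc by (simp add: smult_diff_right)
    then have "pderiv (hermite_pol (Suc k)) = [:2:] * hermite_pol k + smult (2 * real k) (hermite_pol k)"
      by (simp add: Suc.IH pderiv_mult pderiv_diff pderiv_pCons pderiv_smult algebra_simps)
    then show ?thesis
      by (simp add: smult_add_left)
  qed
qed

lemma higher_pderiv_hermite_pol:
  "m \<le> j \<Longrightarrow>
    (pderiv ^^ m) (hermite_pol j) = smult (2 ^ m * fact j / fact (j - m)) (hermite_pol (j - m))"
proof (induction m)
  case 0
  then show ?case by simp
next
  case (Suc m)
  then obtain i where i: "j - m = Suc i" "j - Suc m = i"
    by (metis Suc_diff_Suc Suc_le_lessD)
  have "fact (Suc i) = real (Suc i) * fact i"
    by (simp del: of_nat_Suc)
  then have "2 ^ m * fact j / fact (j - m) * (2 * real (j - m)) =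
      (2 ^ Suc m * fact j / fact (j - Suc m) :: real)"
    unfolding i by (simp add: field_simps del: of_nat_Suc)
  with Suc show ?case
    by (simp add: pderiv_smult pderiv_hermite_pol)
qed

lemma integrable_poly_times_gaussian_scaled:
  fixes p :: "real poly"
  assumes "0 < c"
  shows "integrable lborel (\<lambda>x. poly p x * exp (-(x^2) / c))"
proof -
  define \<sigma> where "\<sigma> = sqrt (c / 2)"
  have gauss: "exp (-(x^2 / c)) = sqrt (pi * c) * normal_density 0 \<sigma> x" for x
    using assms by (simp add: normal_density_def \<sigma>_def real_sqrt_mult)
  have "integrable lborel
      (\<lambda>x. \<Sum>i\<le>degree p. coeff p i * sqrt (pi * c) * (normal_density 0 \<sigma> x * (x - 0) ^ i))"
    using assms by (intro Bochner_Integration.integrable_sum integrable_mult_right integrable_normal_moment)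
      (simp add: \<sigma>_def)
  then show ?thesis
    by (simp add: poly_altdef gauss sum_distrib_left sum_distrib_right mult_ac)
qed

lemmas integrable_poly_times_gaussian = integrable_poly_times_gaussian_scaled[of 1, simplified]

lemma poly_times_gaussian_tendsto_at_top:
  fixes p :: "real poly"
  shows "((\<lambda>x. poly p x * exp (-(x^2))) \<longlongrightarrow> 0) at_top"
proof -
  have "((\<lambda>x. \<Sum>i\<le>degree p. coeff p i * (x ^ i / exp x)) \<longlongrightarrow> (\<Sum>i\<le>degree p. coeff p i * 0)) at_top"
    by (intro tendsto_intros tendsto_power_div_exp_0)
  then have "((\<lambda>x. poly p x / exp x) \<longlongrightarrow> 0) at_top"
    by (simp add: poly_altdef sum_divide_distrib)
  moreover have "((\<lambda>x::real. exp (x - x^2)) \<longlongrightarrow> 0) at_top"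
    by real_asymp
  ultimately have "((\<lambda>x. poly p x / exp x * exp (x - x^2)) \<longlongrightarrow> 0 * 0) at_top"
    by (rule tendsto_mult)
  moreover have "poly p x / exp x * exp (x - x^2) = poly p x * exp (-(x^2))" for x :: real
    by (simp add: exp_diff exp_minus field_simps)
  ultimately show ?thesis
    by simp
qed

lemma poly_times_gaussian_tendsto_at_bot:
  fixes p :: "real poly"
  shows "((\<lambda>x. poly p x * exp (-(x^2))) \<longlongrightarrow> 0) at_bot"
  using poly_times_gaussian_tendsto_at_top[of "pcompose p [:0, -1:]"]
  unfolding filterlim_at_bot_mirror by (simp add: poly_pcompose)

definition gauss_integral :: "real poly \<Rightarrow> real" where
  "gauss_integral p = (\<integral>x. poly p x * exp (-(x^2)) \<partial>lborel)"

lemma gauss_integral_add: "gauss_integral (p + q) = gauss_integral p + gauss_integral q"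
  unfolding gauss_integral_def by (simp add: distrib_right integrable_poly_times_gaussian)

lemma gauss_integral_diff: "gauss_integral (p - q) = gauss_integral p - gauss_integral q"
  unfolding gauss_integral_def by (simp add: left_diff_distrib integrable_poly_times_gaussian)

lemma gauss_integral_smult: "gauss_integral (smult c p) = c * gauss_integral p"
  unfolding gauss_integral_def by (simp add: mult.assoc)

lemma gauss_integral_sum: "gauss_integral (\<Sum>i\<in>I. p i) = (\<Sum>i\<in>I. gauss_integral (p i))"
  by (induction I rule: infinite_finite_induct) (simp_all add: gauss_integral_add gauss_integral_def[of 0])

lemma gauss_integral_nonneg: "(\<And>x. 0 \<le> poly p x) \<Longrightarrow> 0 \<le> gauss_integral p"
  unfolding gauss_integral_def by (intro integral_nonneg_AE) simp

lemma gauss_integral_const: "gauss_integral [:c:] = c * sqrt pi"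
proof -
  have "(\<integral>x. normal_density 0 (1 / sqrt 2) x \<partial>lborel) = 1"
    by simp
  moreover have "normal_density 0 (1 / sqrt 2) x = exp (-(x^2)) / sqrt pi" for x
    by (simp add: normal_density_def power_divide)
  ultimately have "(\<integral>x. exp (-(x^2)) \<partial>lborel) = sqrt pi"
    by simp
  then show ?thesis
    by (simp add: gauss_integral_def)
qed

lemma gauss_integral_pderiv: "gauss_integral (pderiv p) = gauss_integral ([:0, 2:] * p)"
proof -
  let ?F = "\<lambda>x. poly p x * exp (-(x^2))"
  let ?f = "\<lambda>x. poly (pderiv p - [:0, 2:] * p) x * exp (-(x^2))"
  have "(LBINT x=-\<infinity>..\<infinity>. ?f x) = 0 - 0"
  proof (rule interval_integral_FTC_integrable)
    show "(?F has_vector_derivative ?f x) (at x)" for x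
      unfolding has_real_derivative_iff_has_vector_derivative[symmetric]
      by (auto intro!: derivative_eq_intros poly_DERIV simp: algebra_simps)
    show "set_integrable lborel (einterval (-\<infinity>) \<infinity>) ?f"
      using integrable_poly_times_gaussian[of "pderiv p - [:0, 2:] * p"]
      by (simp add: set_integrable_def)
    show "((?F \<circ> real_of_ereal) \<longlongrightarrow> 0) (at_right (-\<infinity>))"
      unfolding ereal_tendsto_simps by (rule poly_times_gaussian_tendsto_at_bot)
    show "((?F \<circ> real_of_ereal) \<longlongrightarrow> 0) (at_left \<infinity>)"
      unfolding ereal_tendsto_simps by (rule poly_times_gaussian_tendsto_at_top)
    show "isCont ?f x" for x
      by (intro continuous_intros)
  qed simp
  then have "gauss_integral (pderiv p - [:0, 2:] * p) = 0"
    by (simp add: gauss_integral_def interval_lebesgue_integral_def set_lebesgue_integral_def)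
  then show ?thesis
    by (simp add: gauss_integral_diff)
qed

lemma gauss_integral_times_hermite_pol:
  "gauss_integral (p * hermite_pol k) = gauss_integral ((pderiv ^^ k) p)"
proof (induction k arbitrary: p)
  case 0
  then show ?case by simp
next
  case (Suc k)
  have "gauss_integral (p * hermite_pol (Suc k)) =
      gauss_integral ([:0, 2:] * (p * hermite_pol k)) - gauss_integral (p * pderiv (hermite_pol k))"
    by (simp add: gauss_integral_diff algebra_simps)
  also have "gauss_integral ([:0, 2:] * (p * hermite_pol k)) = gauss_integral (pderiv (p * hermite_pol k))"
    by (rule gauss_integral_pderiv[symmetric])
  also have "\<dots> = gauss_integral (p * pderiv (hermite_pol k)) + gauss_integral (pderiv p * hermite_pol k)"
    by (simp only: pderiv_mult gauss_integral_add mult.commute[of "hermite_pol k"])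
  also have "gauss_integral (pderiv p * hermite_pol k) = gauss_integral ((pderiv ^^ Suc k) p)"
    by (simp add: Suc.IH funpow_Suc_right del: funpow.simps)
  finally show ?case
    by simp
qed

definition hermite_sqnorm :: "nat \<Rightarrow> real" where
  "hermite_sqnorm k = 2 ^ k * fact k * sqrt pi"

lemma hermite_sqnorm_pos: "0 < hermite_sqnorm k"
  by (simp add: hermite_sqnorm_def)

lemma gauss_integral_hermite_pol_sq: "gauss_integral (hermite_pol k * hermite_pol k) = hermite_sqnorm k"
  using higher_pderiv_hermite_pol[of k k]
  by (simp add: gauss_integral_times_hermite_pol gauss_integral_const hermite_sqnorm_def)

lemma gauss_integral_hermite_pol_orthogonal:
  assumes "j < k"
  shows "gauss_integral (hermite_pol j * hermite_pol k) = 0"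
proof -
  obtain i where k: "k = Suc i + j"
    using assms less_iff_Suc_add by auto
  have "(pderiv ^^ k) (hermite_pol j) = (pderiv ^^ i) (pderiv ((pderiv ^^ j) (hermite_pol j)))"
    unfolding k funpow_add by (simp add: funpow_Suc_right del: funpow.simps)
  also have "\<dots> = 0"
    using higher_pderiv_hermite_pol[of j j] by (simp add: pderiv_smult)
  finally show ?thesis
    using gauss_integral_times_hermite_pol[of "hermite_pol j" k] by (simp add: gauss_integral_def)
qed

definition hermite_normpol :: "nat \<Rightarrow> real poly" where
  "hermite_normpol k = smult (1 / sqrt (hermite_sqnorm k)) (hermite_pol k)"

lemma hermite_fun_eq_poly: "hermite_fun k x = poly (hermite_normpol k) x * exp (-(x^2) / 2)"
  by (simp add: hermite_fun_def hermite_normpol_def hermite_sqnorm_def hermite_poly_eq_poly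
      powr_minus_divide powr_half_sqrt)

lemma gauss_integral_hermite_normpol:
  "gauss_integral (hermite_normpol j * hermite_normpol k) = (if j = k then 1 else 0)"
proof -
  have "gauss_integral (hermite_pol j * hermite_pol k) = (if j = k then hermite_sqnorm k else 0)"
    using gauss_integral_hermite_pol_orthogonal[of j k] gauss_integral_hermite_pol_orthogonal[of k j]
    by (cases j k rule: linorder_cases) (simp_all add: gauss_integral_hermite_pol_sq mult.commute)
  then show ?thesis
    using hermite_sqnorm_pos[of k]
    by (simp add: hermite_normpol_def gauss_integral_smult)
qed

lemma pderiv_hermite_normpol:
  "pderiv (hermite_normpol k) = smult (sqrt (2 * real k)) (hermite_normpol (k - 1))"
proof (cases k)
  case 0
  then show ?thesis by (simp add: hermite_normpol_def pderiv_smult)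
next
  case (Suc i)
  define a where "a = 2 * real k"
  have "hermite_sqnorm k = a * hermite_sqnorm i"
    using Suc by (simp add: hermite_sqnorm_def a_def)
  moreover have "0 < a"
    using Suc by (simp add: a_def)
  ultimately have "a / sqrt (hermite_sqnorm k) = sqrt a / sqrt (hermite_sqnorm i)"
    using hermite_sqnorm_pos[of i] by (simp add: real_sqrt_mult field_simps)
  moreover have "k - 1 = i"
    using Suc by simp
  ultimately show ?thesis
    by (simp add: hermite_normpol_def pderiv_smult pderiv_hermite_pol a_def[symmetric] del: hermite_pol.simps)
qed

lemma gauss_integral_sq_hermite_normpol_sum:
  assumes "finite I"
  shows "gauss_integral ((\<Sum>i\<in>I. smult (b i) (hermite_normpol i))^2) = (\<Sum>i\<in>I. (b i)^2)"
proof -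
  have "(\<Sum>i\<in>I. smult (b i) (hermite_normpol i))^2 =
      (\<Sum>i\<in>I. \<Sum>j\<in>I. smult (b i * b j) (hermite_normpol i * hermite_normpol j))"
    by (simp add: power2_eq_square sum_product mult_smult_left mult_smult_right mult.commute)
  then show ?thesis
    using assms by (simp add: gauss_integral_sum gauss_integral_smult gauss_integral_hermite_normpol
        if_distrib power2_eq_square cong: if_cong)
qed

lemma gauss_integral_sq_pderiv_minus_X:
  "gauss_integral ((pderiv p - [:0, 1:] * p)^2) + gauss_integral (([:0, 1:] * p)^2) =
    gauss_integral (p^2) + gauss_integral ((pderiv p)^2)"
proof -
  define X :: "real poly" where "X = [:0, 1:]"
  have "gauss_integral (pderiv (X * p^2)) = gauss_integral ([:0, 2:] * (X * p^2))"
    by (rule gauss_integral_pderiv)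
  moreover have "pderiv (X * p^2) = p^2 + smult 2 (X * p * pderiv p)"
    by (rule poly_ext) (simp add: X_def pderiv_mult pderiv_pCons power2_eq_square algebra_simps)
  moreover have "[:0, 2:] * (X * p^2) = smult 2 ((X * p)^2)"
    by (rule poly_ext) (simp add: X_def power2_eq_square algebra_simps)
  moreover have "(pderiv p - X * p)^2 = (pderiv p)^2 - smult 2 (X * p * pderiv p) + (X * p)^2"
    by (rule poly_ext) (simp add: power2_eq_square algebra_simps)
  ultimately show ?thesis
    unfolding X_def[symmetric]
    by (simp add: gauss_integral_add gauss_integral_diff gauss_integral_smult)
qed

lemma poly_times_gaussian_eq_integral:
  fixes p :: "real poly" and x :: real
  shows "poly p x * exp (-(x^2)) =
    (\<integral>t. indicator {..<x} t * (poly (pderiv p - [:0, 2:] * p) t * exp (-(t^2))) \<partial>lborel)"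
proof -
  let ?F = "\<lambda>t. poly p t * exp (-(t^2))"
  let ?f = "\<lambda>t. poly (pderiv p - [:0, 2:] * p) t * exp (-(t^2))"
  have "(LBINT t=-\<infinity>..ereal x. ?f t) = ?F x - 0"
  proof (rule interval_integral_FTC_integrable)
    show "(?F has_vector_derivative ?f t) (at t)" for t
      unfolding has_real_derivative_iff_has_vector_derivative[symmetric]
      by (auto intro!: derivative_eq_intros poly_DERIV simp: algebra_simps)
    show "set_integrable lborel (einterval (-\<infinity>) (ereal x)) ?f"
      unfolding set_integrable_def
      by (intro integrable_mult_indicator integrable_poly_times_gaussian) simp
    show "((?F \<circ> real_of_ereal) \<longlongrightarrow> 0) (at_right (-\<infinity>))"
      unfolding ereal_tendsto_simps by (rule poly_times_gaussian_tendsto_at_bot)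
    have "(?F \<longlongrightarrow> ?F x) (at x)"
      by (intro tendsto_intros)
    then show "((?F \<circ> real_of_ereal) \<longlongrightarrow> ?F x) (at_left (ereal x))"
      unfolding ereal_tendsto_simps by (rule filterlim_mono) (simp_all add: at_le)
    show "isCont ?f t" for t
      by (intro continuous_intros)
  qed simp
  then show ?thesis
    by (simp add: interval_lebesgue_integral_def set_lebesgue_integral_def)
qed

lemma two_abs_mult_le: "0 < s \<Longrightarrow> 2 * \<bar>a * b\<bar> \<le> s * a^2 + b^2 / (s::real)"
proof -
  assume s: "0 < s"
  have "0 \<le> (s * \<bar>a\<bar> - \<bar>b\<bar>)^2"
    by simp
  then have "s * (2 * \<bar>a * b\<bar>) \<le> s * (s * a^2 + b^2 / s)"
    using s by (simp add: power2_eq_square algebra_simps abs_mult)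
  then show ?thesis
    using s by simp
qed

lemma poly_sq_times_gaussian_le:
  assumes "0 < s"
  shows "(poly p x)^2 * exp (-(x^2)) \<le>
    s * gauss_integral (p^2) + gauss_integral ((pderiv p - [:0, 1:] * p)^2) / s"
proof -
  define q where "q = pderiv p - [:0, 1:] * p"
  define g where "g = smult s (p^2) + smult (1 / s) (q^2)"
  have "pderiv (p^2) - [:0, 2:] * p^2 = smult 2 (p * q)"
    by (rule poly_ext) (simp add: q_def pderiv_mult power2_eq_square algebra_simps)
  then have "(poly p x)^2 * exp (-(x^2)) =
      (\<integral>t. indicator {..<x} t * (2 * poly p t * poly q t * exp (-(t^2))) \<partial>lborel)"
    using poly_times_gaussian_eq_integral[of "p^2" x] by (simp add: mult.assoc)
  also have "\<dots> \<le> (\<integral>t. poly g t * exp (-(t^2)) \<partial>lborel)"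
  proof (rule integral_mono)
    show "integrable lborel (\<lambda>t. indicator {..<x} t * (2 * poly p t * poly q t * exp (-(t^2))))"
      using integrable_mult_indicator[OF _ integrable_poly_times_gaussian[of "smult 2 (p * q)"],
          of "{..<x}"]
      by (simp add: mult.assoc)
    show "integrable lborel (\<lambda>t. poly g t * exp (-(t^2)))"
      by (rule integrable_poly_times_gaussian)
    fix t
    have "indicator {..<x} t * (2 * poly p t * poly q t) \<le> 2 * \<bar>poly p t * poly q t\<bar>"
      by (simp add: indicator_def abs_ge_self)
    also have "\<dots> \<le> poly g t"
      using two_abs_mult_le[OF assms] by (simp add: g_def)
    finally show "indicator {..<x} t * (2 * poly p t * poly q t * exp (-(t^2))) \<le> poly g t * exp (-(t^2))"
      by (simp add: mult.assoc[symmetric])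
  qed
  also have "\<dots> = gauss_integral g"
    by (simp only: gauss_integral_def)
  also have "\<dots> = s * gauss_integral (p^2) + gauss_integral (q^2) / s"
    by (simp add: g_def gauss_integral_add gauss_integral_smult)
  finally show ?thesis
    by (simp add: q_def)
qed

lemma hermite_fun_sq_le: "(hermite_fun k x)^2 \<le> 2 * sqrt (2 * real k + 1)"
proof -
  define p where "p = hermite_normpol k"
  define s where "s = sqrt (2 * real k + 1)"
  have s: "0 < s"
    by (simp add: s_def)
  have "(hermite_fun k x)^2 = (poly p x)^2 * exp (-(x^2))"
    by (simp add: hermite_fun_eq_poly p_def power_mult_distrib flip: exp_of_nat_mult)
  have p_sq: "gauss_integral (p^2) = 1"
    by (simp add: p_def power2_eq_square gauss_integral_hermite_normpol)
  have "gauss_integral ((pderiv p)^2) = 2 * real k"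
    by (simp add: p_def pderiv_hermite_normpol power2_eq_square gauss_integral_smult
        gauss_integral_hermite_normpol)
  then have "gauss_integral ((pderiv p - [:0, 1:] * p)^2) \<le> 1 + 2 * real k"
    using gauss_integral_sq_pderiv_minus_X[of p] gauss_integral_nonneg[of "([:0, 1:] * p)^2"] p_sq
    by simp
  then have "s * gauss_integral (p^2) + gauss_integral ((pderiv p - [:0, 1:] * p)^2) / s
      \<le> s * 1 + (1 + 2 * real k) / s"
    using p_sq s by (simp add: divide_right_mono)
  with poly_sq_times_gaussian_le[OF s, of p x]
  have "(poly p x)^2 * exp (-(x^2)) \<le> s * 1 + (1 + 2 * real k) / s"
    by linarith
  also have "\<dots> = 2 * s"
    using s by (simp add: s_def field_simps)
  finally show ?thesis
    using \<open>(hermite_fun k x)^2 = (poly p x)^2 * exp (-(x^2))\<close> by (simp add: s_def)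
qed

lemma hermite_coef_est_sq_le: "(hermite_coef_est n X k)^2 \<le> 2 * sqrt (2 * real k + 1)"
proof -
  define M where "M = sqrt (2 * sqrt (2 * real k + 1))"
  have "\<bar>hermite_fun k t\<bar> \<le> M" for t
    using real_sqrt_le_mono[OF hermite_fun_sq_le[of k t]] by (simp add: M_def)
  then have "(\<Sum>i=1..n. \<bar>hermite_fun k (X i)\<bar>) \<le> real n * M"
    using sum_bounded_above[of "{1..n}" "\<lambda>i. \<bar>hermite_fun k (X i)\<bar>" M] by simp
  then have "\<bar>\<Sum>i=1..n. hermite_fun k (X i)\<bar> \<le> real n * M"
    using sum_abs[of "\<lambda>i. hermite_fun k (X i)" "{1..n}"] by linarith
  then have "\<bar>hermite_coef_est n X k\<bar> \<le> M"
    by (cases "n = 0") (simp_all add: hermite_coef_est_def M_def abs_mult field_simps)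
  then have "(hermite_coef_est n X k)^2 \<le> M^2"
    by (metis abs_ge_zero power2_abs power_mono)
  then show ?thesis
    by (simp add: M_def)
qed

lemma pderiv_sum: "pderiv (\<Sum>i\<in>I. f i) = (\<Sum>i\<in>I. pderiv (f i))"
  using higher_pderiv_sum[of 1 f I] by simp

lemma gauss_integral_weighted_hermite_sum_le:
  assumes "\<And>k. k \<le> N \<Longrightarrow> (b k)^2 \<le> B"
  shows "gauss_integral ([:1, 0, 1:] * (\<Sum>k\<le>N. smult (b k) (hermite_normpol k))^2)
    \<le> (2 * (real N + 1) + 2 * (real N)^2) * B"
proof -
  define p where "p = (\<Sum>k\<le>N. smult (b k) (hermite_normpol k))"
  have "gauss_integral (p^2) = (\<Sum>k\<le>N. (b k)^2)"
    unfolding p_def by (rule gauss_integral_sq_hermite_normpol_sum) simp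
  also have "\<dots> \<le> (real N + 1) * B"
    using sum_bounded_above[of "{..N}" "\<lambda>k. (b k)^2" B] assms by (simp add: add.commute)
  finally have p_sq: "gauss_integral (p^2) \<le> (real N + 1) * B" .
  have "pderiv p = (\<Sum>k\<le>N. smult (b k * sqrt (2 * real k)) (hermite_normpol (k - 1)))"
    by (simp add: p_def pderiv_sum pderiv_smult pderiv_hermite_normpol)
  also have "\<dots> = (\<Sum>k<N. smult (b (Suc k) * sqrt (2 * real (Suc k))) (hermite_normpol k))"
    by (subst sum.atMost_shift) simp
  finally have "gauss_integral ((pderiv p)^2) = (\<Sum>k<N. (b (Suc k))^2 * (2 * real (Suc k)))"
    by (simp add: gauss_integral_sq_hermite_normpol_sum power_mult_distrib del: of_nat_Suc)
  also have "\<dots> \<le> real N * (B * (2 * real N))"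
  proof -
    have "(b (Suc k))^2 * (2 * real (Suc k)) \<le> B * (2 * real N)" if "k < N" for k
      using assms[of "Suc k"] that by (intro mult_mono) (auto intro: order_trans[OF zero_le_power2])
    then show ?thesis
      using sum_bounded_above[of "{..<N}" "\<lambda>k. (b (Suc k))^2 * (2 * real (Suc k))"] by simp
  qed
  finally have dp_sq: "gauss_integral ((pderiv p)^2) \<le> 2 * (real N)^2 * B"
    by (simp add: power2_eq_square mult_ac)
  have "[:1, 0, 1:] * p^2 = p^2 + ([:0, 1:] * p)^2"
    by (rule poly_ext) (simp add: algebra_simps power2_eq_square)
  moreover have "gauss_integral (([:0, 1:] * p)^2) \<le> gauss_integral (p^2) + gauss_integral ((pderiv p)^2)"
    using gauss_integral_sq_pderiv_minus_X[of p] gauss_integral_nonneg[of "(pderiv p - [:0, 1:] * p)^2"]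
    by simp
  ultimately show ?thesis
    using p_sq dp_sq unfolding p_def[symmetric] by (simp add: gauss_integral_add algebra_simps)
qed

lemma abs_integral_poly_times_half_gaussian_le:
  fixes p :: "real poly"
  assumes "0 < s"
  shows "\<bar>\<integral>t. indicator {..x} t * (poly p t * exp (-(t^2) / 2)) \<partial>lborel\<bar>
    \<le> (s * gauss_integral ([:1, 0, 1:] * p^2) + pi / s) / 2"
proof -
  define g where
    "g t = (s * (poly ([:1, 0, 1:] * p^2) t * exp (-(t^2))) + inverse (1 + t^2) / s) / 2" for t
  have inverse_integrable: "integrable lborel (\<lambda>t::real. inverse (1 + t^2))"
    using integrable_inverse_1_plus_square by (simp add: set_integrable_def)
  have "\<bar>\<integral>t. indicator {..x} t * (poly p t * exp (-(t^2) / 2)) \<partial>lborel\<bar> \<le> (\<integral>t. g t \<partial>lborel)"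
  proof (rule integral_abs_bound_integral)
    show "integrable lborel (\<lambda>t. indicator {..x} t * (poly p t * exp (-(t^2) / 2)))"
      using integrable_mult_indicator[OF _ integrable_poly_times_gaussian_scaled[of 2 p], of "{..x}"] by simp
    show "integrable lborel g"
      unfolding g_def
      by (intro integrable_divide Bochner_Integration.integrable_add integrable_mult_right
          integrable_poly_times_gaussian inverse_integrable)
    fix t :: real
    have w: "0 < s * (1 + t^2)"
      using assms by (simp add: add_pos_nonneg)
    define f where "f = poly p t * exp (-(t^2) / 2)"
    have "exp (-(t^2) / 2) ^ 2 = exp (-(t^2))"
      by (simp flip: exp_of_nat_mult)
    then have "s * (1 + t^2) * f^2 = s * (poly ([:1, 0, 1:] * p^2) t * exp (-(t^2)))"
      by (simp add: f_def power_mult_distrib algebra_simps power2_eq_square)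
    moreover have "1 / (s * (1 + t^2)) = inverse (1 + t^2) / s"
      by (simp add: field_simps)
    moreover have "\<bar>indicator {..x} t * f\<bar> \<le> \<bar>f\<bar>"
      by (simp add: indicator_def)
    moreover have "2 * \<bar>f\<bar> \<le> s * (1 + t^2) * f^2 + 1 / (s * (1 + t^2))"
      using two_abs_mult_le[OF w, of f 1] by simp
    ultimately show "\<bar>indicator {..x} t * (poly p t * exp (-(t^2) / 2))\<bar> \<le> g t"
      unfolding g_def f_def[symmetric] by argo
  qed
  also have "(\<integral>t. g t \<partial>lborel) =
      (s * gauss_integral ([:1, 0, 1:] * p^2) + (\<integral>t. inverse (1 + t^2) \<partial>lborel) / s) / 2"
    unfolding g_def gauss_integral_def
    by (simp only: integral_divide_zero integral_mult_right_zero
        Bochner_Integration.integral_add[OF integrable_mult_right[OF integrable_poly_times_gaussian]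
          integrable_divide[OF inverse_integrable]])
  also have "(\<integral>t. inverse (1 + t^2) \<partial>lborel) = pi"
    using LBINT_inverse_1_plus_square
    by (simp add: interval_lebesgue_integral_def set_lebesgue_integral_def)
  finally show ?thesis .
qed

lemma hermite_cdf_est_eq_integral:
  "hermite_cdf_est n X N x = (\<integral>t. indicator {..x} t *
     (poly (\<Sum>k\<le>N. smult (hermite_coef_est n X k) (hermite_normpol k)) t * exp (-(t^2) / 2)) \<partial>lborel)"
proof -
  have integrable: "integrable lborel (\<lambda>t. indicator {..x} t * hermite_fun k t)" for k
    unfolding hermite_fun_eq_poly
    using integrable_mult_indicator[OF _ integrable_poly_times_gaussian_scaled[of 2], of "{..x}"] by simp
  then have "integral {..x} (hermite_fun k) = (\<integral>t. indicator {..x} t * hermite_fun k t \<partial>lborel)" for k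
    using set_borel_integral_eq_integral(2)[of "{..x}" "hermite_fun k"]
    by (simp add: set_integrable_def set_lebesgue_integral_def)
  then have "hermite_cdf_est n X N x =
      (\<Sum>k\<le>N. \<integral>t. hermite_coef_est n X k * (indicator {..x} t * hermite_fun k t) \<partial>lborel)"
    by (simp add: hermite_cdf_est_def atLeast0AtMost)
  also have "\<dots> = (\<integral>t. (\<Sum>k\<le>N. hermite_coef_est n X k * (indicator {..x} t * hermite_fun k t)) \<partial>lborel)"
    by (rule Bochner_Integration.integral_sum[symmetric]) (simp add: integrable)
  finally show ?thesis
    by (simp add: hermite_fun_eq_poly poly_sum sum_distrib_left sum_distrib_right mult_ac)
qed

lemma quadratic_times_sqrt_le_powr:
  fixes m :: real
  assumes "1 \<le> m"
  shows "(2 * (m + 1) + 2 * m^2) * (2 * sqrt (2 * m + 1)) \<le> 24 * m powr (5/2)"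
proof -
  have "m * 1 \<le> m * m"
    using assms by (intro mult_left_mono) auto
  then have "2 * (m + 1) + 2 * m^2 \<le> 6 * m^2"
    unfolding power2_eq_square mult_1_right using assms by argo
  moreover have "2 * sqrt (2 * m + 1) \<le> 4 * sqrt m"
    using assms real_sqrt_le_mono[of "2 * m + 1" "4 * m"] by (simp add: real_sqrt_mult)
  ultimately have "(2 * (m + 1) + 2 * m^2) * (2 * sqrt (2 * m + 1)) \<le> 6 * m^2 * (4 * sqrt m)"
    by (rule mult_mono) (use assms in simp_all)
  also have "\<dots> = 24 * (m powr 2 * m powr (1/2))"
    using assms by (simp add: powr_half_sqrt powr_numeral)
  also have "\<dots> = 24 * m powr (5/2)"
    unfolding powr_add[symmetric] by simp
  finally show ?thesis .
qed

lemma gauss_integral_weighted_hermite_coef_est_le: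
  assumes "1 \<le> N"
  shows "gauss_integral ([:1, 0, 1:] * (\<Sum>k\<le>N. smult (hermite_coef_est n X k) (hermite_normpol k))^2)
    \<le> 24 * real N powr (5/2)"
proof -
  have "(hermite_coef_est n X k)^2 \<le> 2 * sqrt (2 * real N + 1)" if "k \<le> N" for k
  proof -
    have "sqrt (2 * real k + 1) \<le> sqrt (2 * real N + 1)"
      using that by simp
    then show ?thesis
      using hermite_coef_est_sq_le[of n X k] by linarith
  qed
  then have "gauss_integral ([:1, 0, 1:] * (\<Sum>k\<le>N. smult (hermite_coef_est n X k) (hermite_normpol k))^2)
      \<le> (2 * (real N + 1) + 2 * (real N)^2) * (2 * sqrt (2 * real N + 1))"
    by (rule gauss_integral_weighted_hermite_sum_le)
  also have "\<dots> \<le> 24 * real N powr (5/2)"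
    using assms by (intro quadratic_times_sqrt_le_powr) simp
  finally show ?thesis .
qed

lemma balanced_bound_le_powr:
  fixes m A :: real
  assumes "1 \<le> m" and "A \<le> 24 * m powr (5/2)"
  shows "(m powr (-5/4) * A + pi / m powr (-5/4)) / 2 \<le> 14 * m powr (17/12)"
proof -
  define s where "s = m powr (-5/4)"
  have s: "0 < s"
    using assms by (simp add: s_def)
  have "s * A \<le> s * (24 * m powr (5/2))"
    using assms s by (intro mult_left_mono) auto
  moreover have "pi / s \<le> 4 / s"
    using s pi_less_4 by (intro divide_right_mono) auto
  moreover have "s * m powr (5/2) = m powr (5/4)"
    using assms by (simp add: s_def flip: powr_add)
  moreover have "4 / s = 4 * m powr (5/4)"
    using assms by (simp add: s_def powr_minus_divide)
  ultimately have "(s * A + pi / s) / 2 \<le> 14 * m powr (5/4)"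
    by (simp add: algebra_simps)
  also have "\<dots> \<le> 14 * m powr (17/12)"
    using assms by (intro mult_left_mono powr_mono) auto
  finally show ?thesis
    by (simp add: s_def)
qed

theorem lemma1:
  shows "\<exists>C::real. \<forall>(n::nat) (X::nat \<Rightarrow> real) (N::nat) (x::real).
           N \<ge> 1 \<longrightarrow> \<bar>hermite_cdf_est n X N x\<bar> \<le> C * real N powr (17/12)"
proof (intro exI[of _ 14] allI impI)
  fix n :: nat and X :: "nat \<Rightarrow> real" and N :: nat and x :: real
  assume N: "1 \<le> N"
  define p where "p = (\<Sum>k\<le>N. smult (hermite_coef_est n X k) (hermite_normpol k))"
  have "0 < real N powr (-5/4)"
    using N by simp
  then have "\<bar>hermite_cdf_est n X N x\<bar>
      \<le> (real N powr (-5/4) * gauss_integral ([:1, 0, 1:] * p^2) + pi / real N powr (-5/4)) / 2"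
    unfolding hermite_cdf_est_eq_integral p_def[symmetric] by (rule abs_integral_poly_times_half_gaussian_le)
  also have "\<dots> \<le> 14 * real N powr (17/12)"
    using N gauss_integral_weighted_hermite_coef_est_le[OF N, of n X]
    by (intro balanced_bound_le_powr) (simp_all add: p_def)
  finally show "\<bar>hermite_cdf_est n X N x\<bar> \<le> 14 * real N powr (17/12)" .
qed

end
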